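(* Consider the method U-CS$(\hat x_0,\chi,\lambda_0,\bar\varepsilon)$ described in the context, with $(\hat x_0,\chi,\lambda_0,\bar\varepsilon)\in\mathrm{dom}\, h\times[0,1)\times\mathbb{R}_{++}\times\mathbb{R}_{++}$. Then: (a) $\{\lambda_k\}$ is non-increasing; (b) for every $k\ge1$ (for which $\hat x_k$ is generated), \[ \hat x_k=\mathrm{argmin}_{u\in\mathbb{R}^n}\left\{\ell_f(u;\hat x_{k-1})+h(u)+\frac1{2\lambda_k}\|u-\hat x_{k-1}\|^2\right\},\quad f(\hat x_k)-\ell_f(\hat x_k;\hat x_{k-1})+\frac{\chi-1}{2\lambda_k}\|\hat x_k-\hat x_{k-1}\|^2\le\frac{(1-\chi)\bar\varepsilon}2, \] \[ \lambda_k\ge\min\left\{\frac{(1-\chi)^2\bar\varepsilon}{8M_f^2+2\bar\varepsilon L_f},\ \lambda_0\right\}; \] (c) with $\hat y_k=\hat x_k$ and $\hat\Gamma_k(\cdot)=\ell_f(\cdot;\hat x_{k-1})+h(\cdot)$, for every $k\ge1$ one has $\hat\Gamma_k\le\phi$, $\hat x_k=\mathrm{argmin}_u\{\hat\Gamma_k(u)+\frac1{2\lambda_k}\|u-\hat x_{k-1}\|^2\}$ and $\phi(\hat y_k)+\frac{\chi}{2\lambda_k}\|\hat y_k-\hat x_{k-1}\|^2-\min_u\{\hat\Gamma_k(u)+\frac1{2\lambda_k}\|u-\hat x_{k-1}\|^2\}\le(1-\chi)\bar\varepsilon/2$; moreover $\lambda_k\ge\underline\lambda$ for all $k$, with $\underline\lambda$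 the lower bound in (b).
   Context: Setting: $f,h:\mathbb{R}^n\to\mathbb{R}\cup\{+\infty\}$ are proper lsc convex with $\mathrm{dom}\, h\subseteq\mathrm{dom}\, f$, $\phi=f+h$, $\phi_*=\inf\phi$, attained on a nonempty set. A subgradient oracle $f':\mathrm{dom}\, h\to\mathbb{R}^n$, $f'(x)\in\partial f(x)$, satisfies $\|f'(x)-f'(y)\|\le2M_f+L_f\|x-y\|$ for all $x,y\in\mathrm{dom}\, h$, for some $M_f,L_f\ge0$. $\ell_f(u;x):=f(x)+\langle f'(x),u-x\rangle$. Method U-CS$(\hat x_0,\chi,\lambda_0,\bar\varepsilon)$: Step 0: $\lambda=\lambda_0$, $k=1$. Step 1: $x=\mathrm{argmin}_u\{\ell_f(u;\hat x_{k-1})+h(u)+\frac1{2\lambda}\|u-\hat x_{k-1}\|^2\}$; if $\phi(x)-\phi_*\le\bar\varepsilon$ stop. Step 2: if $f(x)-\ell_f(x;\hat x_{k-1})-(1-\chi)\|x-\hat x_{k-1}\|^2/(2\lambda)\le(1-\chi)\bar\varepsilon/2$ fails, set $\lambda=\lambda/2$ and go to Step 1; else set $\lambda_k=\lambda$, $\hat x_k=x$, $k\leftarrow k+1$, go to Step 1. *)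

theory Defs
  imports "HOL-Analysis.Analysis"
begin

definition edom :: "('a \<Rightarrow> ereal) \<Rightarrow> 'a set" where
  "edom f = {x. f x < \<infinity>}"

definition proper_fun :: "('a \<Rightarrow> ereal) \<Rightarrow> bool" where
  "proper_fun f \<longleftrightarrow> (\<forall>x. f x \<noteq> -\<infinity>) \<and> (\<exists>x. f x < \<infinity>)"

definition lsc_fun :: "('a::topological_space \<Rightarrow> ereal) \<Rightarrow> bool" where
  "lsc_fun f \<longleftrightarrow> (\<forall>c::real. closed {x. f x \<le> ereal c})"

definition econvex :: "('a::real_vector \<Rightarrow> ereal) \<Rightarrow> bool" where
  "econvex f \<longleftrightarrow> (\<forall>x y t. 0 < t \<and> t < 1 \<longrightarrow>
      f ((1 - t) *\<^sub>R x + t *\<^sub>R y) \<le> ereal (1 - t) * f x + ereal t * f y)"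

definition lin_f :: "('a::real_inner \<Rightarrow> ereal) \<Rightarrow> ('a \<Rightarrow> 'a) \<Rightarrow> 'a \<Rightarrow> 'a \<Rightarrow> ereal" where
  "lin_f f f' u x = f x + ereal (inner (f' x) (u - x))"

definition cs_obj :: "('a::real_inner \<Rightarrow> ereal) \<Rightarrow> ('a \<Rightarrow> 'a) \<Rightarrow> ('a \<Rightarrow> ereal)
    \<Rightarrow> 'a \<Rightarrow> real \<Rightarrow> 'a \<Rightarrow> ereal" where
  "cs_obj f f' h xc lam u = lin_f f f' u xc + h u + ereal ((norm (u - xc))\<^sup>2 / (2 * lam))"

definition cs_prox :: "('a::real_inner \<Rightarrow> ereal) \<Rightarrow> ('a \<Rightarrow> 'a) \<Rightarrow> ('a \<Rightarrow> ereal)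
    \<Rightarrow> 'a \<Rightarrow> real \<Rightarrow> 'a" where
  "cs_prox f f' h xc lam = (THE x. \<forall>u. cs_obj f f' h xc lam x \<le> cs_obj f f' h xc lam u)"

definition ucs_stop :: "('a \<Rightarrow> ereal) \<Rightarrow> ('a \<Rightarrow> ereal) \<Rightarrow> real \<Rightarrow> 'a \<Rightarrow> bool" where
  "ucs_stop f h eps x \<longleftrightarrow> (f x + h x) - (INF u. f u + h u) \<le> ereal eps"

definition ucs_test :: "('a::real_inner \<Rightarrow> ereal) \<Rightarrow> ('a \<Rightarrow> 'a) \<Rightarrow> real \<Rightarrow> real
    \<Rightarrow> 'a \<Rightarrow> real \<Rightarrow> 'a \<Rightarrow> bool" where
  "ucs_test f f' chi eps xc lam x \<longleftrightarrow>
     f x - lin_f f f' x xc - ereal ((1 - chi) * (norm (x - xc))\<^sup>2 / (2 * lam))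
       \<le> ereal ((1 - chi) * eps / 2)"

text \<open>States reached at (entry to) Step 1 of U-CS(x0, chi, lam0, eps):
  ucs_reach ... k lam xc  means that k iterates have been accepted so far,
  the current prox centre is  xc = hat x_k  and the current stepsize is lam.\<close>
inductive ucs_reach :: "('a::real_inner \<Rightarrow> ereal) \<Rightarrow> ('a \<Rightarrow> 'a) \<Rightarrow> ('a \<Rightarrow> ereal)
    \<Rightarrow> 'a \<Rightarrow> real \<Rightarrow> real \<Rightarrow> real \<Rightarrow> nat \<Rightarrow> real \<Rightarrow> 'a \<Rightarrow> bool"
  for f f' h x0 chi lam0 eps where
  init: "ucs_reach f f' h x0 chi lam0 eps 0 lam0 x0"
| halve: "ucs_reach f f' h x0 chi lam0 eps k lam xc \<Longrightarrow>
          \<not> ucs_stop f h eps (cs_prox f f' h xc lam) \<Longrightarrow>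
          \<not> ucs_test f f' chi eps xc lam (cs_prox f f' h xc lam) \<Longrightarrow>
          ucs_reach f f' h x0 chi lam0 eps k (lam / 2) xc"
| accept: "ucs_reach f f' h x0 chi lam0 eps k lam xc \<Longrightarrow>
          \<not> ucs_stop f h eps (cs_prox f f' h xc lam) \<Longrightarrow>
          ucs_test f f' chi eps xc lam (cs_prox f f' h xc lam) \<Longrightarrow>
          ucs_reach f f' h x0 chi lam0 eps (Suc k) lam (cs_prox f f' h xc lam)"

text \<open>ucs_gen ... k lamk xk : the method generates  lambda_k = lamk  and
  hat x_k = xk  (for k = 0 these are the inputs lam0 and x0).\<close>
definition ucs_gen :: "('a::real_inner \<Rightarrow> ereal) \<Rightarrow> ('a \<Rightarrow> 'a) \<Rightarrow> ('a \<Rightarrow> ereal)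
    \<Rightarrow> 'a \<Rightarrow> real \<Rightarrow> real \<Rightarrow> real \<Rightarrow> nat \<Rightarrow> real \<Rightarrow> 'a \<Rightarrow> bool" where
  "ucs_gen f f' h x0 chi lam0 eps k lamk xk \<longleftrightarrow>
     (k = 0 \<and> lamk = lam0 \<and> xk = x0) \<or>
     (\<exists>j xc. k = Suc j \<and> ucs_reach f f' h x0 chi lam0 eps j lamk xc \<and>
        \<not> ucs_stop f h eps (cs_prox f f' h xc lamk) \<and>
        ucs_test f f' chi eps xc lamk (cs_prox f f' h xc lamk) \<and>
        xk = cs_prox f f' h xc lamk)"

text \<open>Lower bound  min{(1-chi)^2 eps/(8 M^2 + 2 eps L), lam0}, with the
  convention that the first entry is +infinity when the denominator is 0.\<close>
definition lam_lower :: "real \<Rightarrow> real \<Rightarrow> real \<Rightarrow> real \<Rightarrow> real \<Rightarrow> real" where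
  "lam_lower chi eps M L lam0 =
     (if 8 * M\<^sup>2 + 2 * eps * L = 0 then lam0
      else min ((1 - chi)\<^sup>2 * eps / (8 * M\<^sup>2 + 2 * eps * L)) lam0)"

end

theory Submission
  imports Defs
begin

text \<open>Each prox subproblem minimises h plus a strongly convex quadratic, so it has exactly
  one solution: existence by coercivity (h has an affine minorant, obtained by separating a
  point from its closed convex epigraph) and lower semicontinuity, uniqueness by the midpoint
  inequality.

  Summing the subgradient inequality along a uniform partition of the segment from x to x'
  and bounding each increment of the oracle gives
  f(x') - l_f(x'; x) <= 2 M_f t + L_f t^2 / 2 with t = ||x' - x||, without any
  differentiability. Hence the acceptance test of Step 2 holds as soon as
  lambda (4 M_f^2 + eps L_f) <= (1 - chi)^2 eps, so lambda is only halved above that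
  threshold and never falls below the stated lower bound.

  The method is deterministic: all reachable states lie on one trajectory along which the
  iteration counter increases, the stepsize decreases, and the prox centre changes only
  together with the counter. This identifies the centre of iteration k + 1 with the k-th
  iterate and gives the monotonicity of lambda_k; the remaining claims rewrite the
  acceptance test.\<close>

section \<open>Proximal subproblems\<close>

lemma proper_fun_real_of_ereal:
  assumes "proper_fun h" "h x < \<infinity>"
  shows "h x = ereal (real_of_ereal (h x))"
  using assms unfolding proper_fun_def by (cases "h x") auto

lemma econvex_combination_le:
  assumes "econvex h" "h x \<le> ereal r" "h y \<le> ereal s" "0 \<le> t" "t \<le> 1"
  shows "h ((1 - t) *\<^sub>R x + t *\<^sub>R y) \<le> ereal ((1 - t) * r + t * s)"
proof (cases "t = 0 \<or> t = 1")
  case True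
  then show ?thesis using assms by auto
next
  case False
  then have t: "0 < t" "t < 1" using assms by auto
  have "h ((1 - t) *\<^sub>R x + t *\<^sub>R y) \<le> ereal (1 - t) * h x + ereal t * h y"
    using assms(1) t unfolding econvex_def by blast
  also have "\<dots> \<le> ereal (1 - t) * ereal r + ereal t * ereal s"
    using t assms(2,3) by (intro add_mono ereal_mult_left_mono) auto
  finally show ?thesis by simp
qed

lemma convex_edom:
  assumes "econvex h"
  shows "convex (edom h)"
  unfolding convex_alt
proof (intro ballI allI impI)
  fix x y and t :: real
  assume "x \<in> edom h" "y \<in> edom h" "0 \<le> t \<and> t \<le> 1"
  then have "h ((1 - t) *\<^sub>R x + t *\<^sub>R y)
      \<le> ereal ((1 - t) * real_of_ereal (h x) + t * real_of_ereal (h y))"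
    by (intro econvex_combination_le[OF assms]) (auto simp: edom_def ereal_real)
  then show "(1 - t) *\<^sub>R x + t *\<^sub>R y \<in> edom h"
    unfolding edom_def by (auto intro: le_less_trans[of _ "ereal _"])
qed

lemma closed_epigraph:
  fixes h :: "'a::topological_space \<Rightarrow> ereal"
  assumes "lsc_fun h"
  shows "closed {p::'a \<times> real. h (fst p) \<le> ereal (snd p)}"
proof -
  have "- {p::'a \<times> real. h (fst p) \<le> ereal (snd p)} = (\<Union>c. (- {x. h x \<le> ereal c}) \<times> {..<c})"
  proof (intro set_eqI iffI)
    fix p :: "'a \<times> real"
    assume "p \<in> - {p. h (fst p) \<le> ereal (snd p)}"
    then obtain c where "ereal (snd p) < ereal c" "ereal c < h (fst p)"
      using ereal_dense2 by (metis ComplD mem_Collect_eq not_le)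
    then show "p \<in> (\<Union>c. (- {x. h x \<le> ereal c}) \<times> {..<c})"
      by (cases p) (auto intro!: exI[of _ c])
  qed (auto simp: not_le intro: less_le_trans[of "ereal _" "ereal _"])
  moreover have "open (\<Union>c. (- {x. h x \<le> ereal c}) \<times> {..<c})"
    using assms unfolding lsc_fun_def by (intro open_UN ballI open_Times) auto
  ultimately show ?thesis by (simp add: closed_def)
qed

lemma econvex_affine_minorant:
  fixes h :: "'a::euclidean_space \<Rightarrow> ereal"
  assumes hp: "proper_fun h" and hl: "lsc_fun h" and hc: "econvex h"
  shows "\<exists>a b. \<forall>x. ereal (inner a x + b) \<le> h x"
proof -
  let ?E = "{p::'a \<times> real. h (fst p) \<le> ereal (snd p)}"
  have "convex ?E"
    unfolding convex_alt
    using econvex_combination_le[OF hc] by (auto simp: algebra_simps)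
  obtain x0 where x0: "h x0 < \<infinity>" using hp unfolding proper_fun_def by auto
  define y0 where "y0 = real_of_ereal (h x0)"
  have hx0: "h x0 = ereal y0" using proper_fun_real_of_ereal[OF hp x0] y0_def by simp
  have "(x0, y0 - 1) \<notin> ?E" using hx0 by simp
  from separating_hyperplane_closed_point[OF \<open>convex ?E\<close> closed_epigraph[OF hl] this]
  obtain a \<beta> b where sep: "inner a x0 + \<beta> * (y0 - 1) < b"
    "\<And>x y. h x \<le> ereal y \<Longrightarrow> b < inner a x + \<beta> * y"
    by (force simp: inner_Pair)
  have "b < inner a x0 + \<beta> * y0" using sep(2) hx0 by simp
  with sep(1) have \<beta>: "\<beta> > 0" by (simp add: algebra_simps)
  have "ereal (inner (- a /\<^sub>R \<beta>) x + b / \<beta>) \<le> h x" for x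
  proof (cases "h x < \<infinity>")
    case True
    then have hx: "h x = ereal (real_of_ereal (h x))" by (rule proper_fun_real_of_ereal[OF hp])
    have "b < inner a x + \<beta> * real_of_ereal (h x)" using sep(2) hx by (metis order.refl)
    then show ?thesis using \<beta> by (subst hx) (simp add: field_simps)
  qed simp
  then show ?thesis by blast
qed

lemma closed_sublevels_attains_min:
  fixes G :: "'a::heine_borel \<Rightarrow> ereal"
  assumes closed: "\<And>c. closed {u. G u \<le> ereal c}" and bounded: "bounded {u. G u \<le> ereal m}"
    and x1: "G x1 \<le> ereal m"
  shows "\<exists>x. \<forall>u. G x \<le> G u"
proof -
  let ?S = "{u. G u \<le> ereal m}"
  let ?I = "{c. (\<exists>y. G y < ereal c) \<and> c \<le> m}"
  \<comment> \<open>A point of ?S in every sublevel set strictly above inf G is a minimiser.\<close>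
  have "compact ?S" using closed bounded by (simp add: compact_eq_bounded_closed)
  have "?S \<inter> (\<Inter>c\<in>?I. {u. G u \<le> ereal c}) \<noteq> {}"
  proof (rule compact_imp_fip_image[OF \<open>compact ?S\<close>])
    show "closed {u. G u \<le> ereal c}" for c by (rule closed)
    fix I' assume I': "finite I'" "I' \<subseteq> ?I"
    show "?S \<inter> (\<Inter>c\<in>I'. {u. G u \<le> ereal c}) \<noteq> {}"
    proof (cases "I' = {}")
      case True
      then show ?thesis using x1 by auto
    next
      case False
      with I' have "Min I' \<in> I'" by simp
      with I' obtain y where y: "G y < ereal (Min I')" "Min I' \<le> m" by blast
      have "G y \<le> ereal c" if "c \<in> I'" for c
        using y(1) Min_le[OF I'(1) that] by (metis ereal_less_eq(3) less_imp_le order_trans)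
      moreover have "G y \<le> ereal m"
        using y by (metis ereal_less_eq(3) less_imp_le order_trans)
      ultimately show ?thesis by blast
    qed
  qed
  then obtain x where x: "x \<in> ?S" "\<forall>c\<in>?I. G x \<le> ereal c" by blast
  have "G x \<le> G u" for u
  proof (rule ccontr)
    assume "\<not> G x \<le> G u"
    then obtain c where c: "G u < ereal c" "ereal c < G x"
      using ereal_dense2 not_le by metis
    have "ereal c < ereal m" using less_le_trans[OF c(2), of "ereal m"] x(1) by simp
    with c(1) have "c \<in> ?I" by auto
    with x(2) have "G x \<le> ereal c" by blast
    with c(2) show False by simp
  qed
  then show ?thesis by blast
qed

lemma square_le_linear_imp_le:
  fixes r A B :: real
  assumes "r\<^sup>2 \<le> A + B * r"
  shows "r \<le> max 1 (\<bar>A\<bar> + \<bar>B\<bar>)"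
proof (cases "r \<le> 1")
  case False
  have "A \<le> \<bar>A\<bar> * r"
    using abs_ge_self[of A] mult_left_mono[of 1 r "\<bar>A\<bar>"] False by simp
  moreover have "B * r \<le> \<bar>B\<bar> * r"
    using False by (simp add: mult_right_mono)
  ultimately have "r * r \<le> (\<bar>A\<bar> + \<bar>B\<bar>) * r"
    using assms by (simp add: power2_eq_square distrib_right)
  then show ?thesis using False by simp
qed simp

lemma prox_quadratic_exists_min:
  fixes h :: "'a::euclidean_space \<Rightarrow> ereal" and c :: real and v z :: 'a
  assumes hp: "proper_fun h" and hl: "lsc_fun h" and hc: "econvex h" and lam: "lam > 0"
  defines "g \<equiv> \<lambda>u. c + inner v (u - z) + (norm (u - z))\<^sup>2 / (2 * lam)"
  shows "\<exists>x. \<forall>u. h x + ereal (g x) \<le> h u + ereal (g u)"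
proof -
  define G where "G u = h u + ereal (g u)" for u
  have closed: "closed {u. G u \<le> ereal d}" for d
  proof -
    have "h u + ereal (g u) \<le> ereal d \<longleftrightarrow> h u \<le> ereal (d - g u)" for u
      by (cases "h u") (auto simp: algebra_simps)
    then have "{u. G u \<le> ereal d} = (\<lambda>u. (u, d - g u)) -` {p. h (fst p) \<le> ereal (snd p)}"
      by (auto simp: G_def)
    moreover have "closed ((\<lambda>u. (u, d - g u)) -` {p. h (fst p) \<le> ereal (snd p)})"
      using lam by (intro continuous_closed_vimage closed_epigraph hl)
        (auto simp: g_def intro!: continuous_intros)
    ultimately show ?thesis by simp
  qed
  obtain a b where ab: "\<And>x. ereal (inner a x + b) \<le> h x"
    using econvex_affine_minorant[OF hp hl hc] by blast
  obtain x1 where x1: "h x1 < \<infinity>" using hp unfolding proper_fun_def by auto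
  define m where "m = real_of_ereal (h x1) + g x1"
  have Gx1: "G x1 = ereal m"
    unfolding G_def m_def by (subst proper_fun_real_of_ereal[OF hp x1]) simp
  define A where "A = 2 * lam * (m - inner a z - b - c)"
  define B where "B = 2 * lam * (norm a + norm v)"
  have "{u. G u \<le> ereal m} \<subseteq> cball z (max 1 (\<bar>A\<bar> + \<bar>B\<bar>))"
  proof
    fix u assume "u \<in> {u. G u \<le> ereal m}"
    have "ereal (inner a u + b + g u) \<le> G u"
      unfolding G_def using add_right_mono[OF ab, of u "ereal (g u)"] by simp
    also have "\<dots> \<le> ereal m" using \<open>u \<in> {u. G u \<le> ereal m}\<close> by simp
    finally have le: "inner a u + b + g u \<le> m" by simp
    define \<rho> where "\<rho> = norm (u - z)"
    have "inner a z - norm a * \<rho> \<le> inner a u" "- (norm v * \<rho>) \<le> inner v (u - z)"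
      using Cauchy_Schwarz_ineq2[of a "u - z"] Cauchy_Schwarz_ineq2[of v "u - z"]
      by (simp_all add: \<rho>_def inner_diff_right abs_le_iff)
    with le have "\<rho>\<^sup>2 / (2 * lam) \<le> (m - inner a z - b - c) + norm a * \<rho> + norm v * \<rho>"
      unfolding g_def \<rho>_def[symmetric] by linarith
    then have "\<rho>\<^sup>2 \<le> ((m - inner a z - b - c) + norm a * \<rho> + norm v * \<rho>) * (2 * lam)"
      using lam by (simp add: pos_divide_le_eq)
    then have "\<rho>\<^sup>2 \<le> A + B * \<rho>"
      unfolding A_def B_def by (simp add: algebra_simps)
    then have "\<rho> \<le> max 1 (\<bar>A\<bar> + \<bar>B\<bar>)" by (rule square_le_linear_imp_le)
    then show "u \<in> cball z (max 1 (\<bar>A\<bar> + \<bar>B\<bar>))"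
      unfolding \<rho>_def by (simp add: dist_norm norm_minus_commute)
  qed
  then have "bounded {u. G u \<le> ereal m}" by (rule bounded_subset[OF bounded_cball])
  from closed_sublevels_attains_min[OF closed this, of x1] Gx1 show ?thesis
    unfolding G_def by simp
qed

lemma minimizer_in_edom:
  assumes "proper_fun h" and "\<forall>u. h x + ereal (g x) \<le> h u + ereal (g u)"
  shows "x \<in> edom h"
proof -
  obtain x1 where "h x1 < \<infinity>" using assms(1) unfolding proper_fun_def by auto
  then have "h x + ereal (g x) < \<infinity>" using assms(2) le_less_trans by fastforce
  then show ?thesis unfolding edom_def by (cases "h x") auto
qed

lemma norm_midpoint_squared:
  fixes a b :: "'a::real_inner"
  shows "(norm ((1/2) *\<^sub>R (a + b)))\<^sup>2 = ((norm a)\<^sup>2 + (norm b)\<^sup>2) / 2 - (norm (a - b))\<^sup>2 / 4"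
  by (simp add: power2_norm_eq_inner inner_add_left inner_add_right inner_diff_left
      inner_diff_right inner_commute algebra_simps) (simp add: field_simps)

lemma prox_quadratic_min_unique:
  fixes h :: "'a::real_inner \<Rightarrow> ereal" and c :: real and v z :: 'a
  assumes hp: "proper_fun h" and hc: "econvex h" and lam: "lam > 0"
  defines "g \<equiv> \<lambda>u. c + inner v (u - z) + (norm (u - z))\<^sup>2 / (2 * lam)"
  assumes x: "\<forall>u. h x + ereal (g x) \<le> h u + ereal (g u)"
    and y: "\<forall>u. h y + ereal (g y) \<le> h u + ereal (g u)"
  shows "x = y"
proof (rule ccontr)
  assume "x \<noteq> y"
  obtain hx hy where hx: "h x = ereal hx" and hy: "h y = ereal hy"
    using minimizer_in_edom[OF hp x] minimizer_in_edom[OF hp y] proper_fun_real_of_ereal[OF hp]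
    unfolding edom_def by blast
  have eq: "hx + g x = hy + g y"
    using x y hx hy by (metis antisym plus_ereal.simps(1) ereal.inject)
  define w where "w = (1/2) *\<^sub>R (x + y)"
  have hw: "h w \<le> ereal ((1 - 1/2) * hx + 1/2 * hy)"
    using econvex_combination_le[OF hc, of x hx y hy "1/2"] hx hy
    by (simp add: w_def scaleR_add_right)
  have gw: "g w = (g x + g y) / 2 - (norm (x - y))\<^sup>2 / (8 * lam)"
  proof -
    have wz: "w - z = (1/2) *\<^sub>R ((x - z) + (y - z))"
      by (simp add: w_def algebra_simps flip: scaleR_add_left)
    have n: "(norm (w - z))\<^sup>2 = ((norm (x - z))\<^sup>2 + (norm (y - z))\<^sup>2) / 2 - (norm (x - y))\<^sup>2 / 4"
      unfolding wz using norm_midpoint_squared[of "x - z" "y - z"] by simp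
    moreover have i: "inner v (w - z) = (inner v (x - z) + inner v (y - z)) / 2"
      unfolding wz by (simp add: inner_add_right)
    ultimately show ?thesis
      unfolding g_def n i using lam by (simp add: field_simps)
  qed
  have "(norm (x - y))\<^sup>2 / (8 * lam) > 0" using \<open>x \<noteq> y\<close> lam by simp
  have "h w + ereal (g w) \<le> ereal ((1 - 1/2) * hx + 1/2 * hy + g w)"
    using add_right_mono[OF hw, of "ereal (g w)"] by simp
  also have "\<dots> < h x + ereal (g x)"
    using gw eq hx \<open>(norm (x - y))\<^sup>2 / (8 * lam) > 0\<close> by (simp add: field_simps)
  finally have "h w + ereal (g w) < h x + ereal (g x)" .
  then show False using x by (meson not_le)
qed

section \<open>Acceptance of small stepsizes\<close>

lemma subgradient_oracle_riemann_bound: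
  fixes F :: "'a::real_inner \<Rightarrow> real" and g :: "'a \<Rightarrow> 'a"
  assumes "convex C" and xc: "xc \<in> C" and x: "x \<in> C"
    and subgrad: "\<And>p q. p \<in> C \<Longrightarrow> q \<in> C \<Longrightarrow> F p + inner (g p) (q - p) \<le> F q"
    and g_bound: "\<And>p q. p \<in> C \<Longrightarrow> q \<in> C \<Longrightarrow> norm (g p - g q) \<le> 2 * M + L * norm (p - q)"
    and n: "0 < n"
  defines "t \<equiv> norm (x - xc)"
  shows "F x - F xc - inner (g xc) (x - xc) \<le> 2 * M * t + L / 2 * t\<^sup>2 + L * t\<^sup>2 / (2 * real n)"
proof -
  define d where "d = x - xc"
  define p where "p i = xc + (real i / real n) *\<^sub>R d" for i :: nat
  have p_in: "p i \<in> C" if "i \<le> n" for i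
  proof -
    have "p i = (1 - real i / real n) *\<^sub>R xc + (real i / real n) *\<^sub>R x"
      unfolding p_def d_def by (simp add: algebra_simps)
    then show ?thesis
      using that n convexD_alt[OF \<open>convex C\<close> xc x, of "real i / real n"] by simp
  qed
  have increment: "F (p (Suc i)) - F (p i) \<le> inner (g (p (Suc i))) d / real n" if "i < n" for i
  proof -
    have "p i - p (Suc i) = - (1 / real n) *\<^sub>R d"
      unfolding p_def by (simp add: algebra_simps add_divide_distrib flip: scaleR_add_left)
    then show ?thesis
      using subgrad[OF p_in p_in, of "Suc i" i] that by (simp add: inner_diff_right)
  qed
  have g_increment_bound:
    "inner (g (p (Suc i)) - g xc) d \<le> (2 * M + L * (real (Suc i) / real n * t)) * t"
    if "i < n" for i
  proof -
    have "inner (g (p (Suc i)) - g xc) d \<le> norm (g (p (Suc i)) - g xc) * t"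
      unfolding t_def d_def by (rule norm_cauchy_schwarz)
    also have "\<dots> \<le> (2 * M + L * norm (p (Suc i) - xc)) * t"
      using g_bound[OF p_in xc, of "Suc i"] that unfolding t_def by (intro mult_right_mono) auto
    also have "norm (p (Suc i) - xc) = real (Suc i) / real n * t"
      unfolding p_def t_def d_def by simp
    finally show ?thesis .
  qed
  have gauss: "(\<Sum>i<n. real (Suc i)) = real n * (real n + 1) / 2"
    by (induction n) (simp_all add: field_simps)
  have "F x - F xc = (\<Sum>i<n. F (p (Suc i)) - F (p i))"
    using sum_lessThan_telescope[of "\<lambda>i. F (p i)" n] n by (simp add: p_def d_def)
  moreover have "inner (g xc) d = (\<Sum>i<n. inner (g xc) d / real n)" using n by simp
  ultimately have "F x - F xc - inner (g xc) d
      = (\<Sum>i<n. F (p (Suc i)) - F (p i) - inner (g xc) d / real n)"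
    by (simp add: sum_subtractf)
  also have "\<dots> \<le> (\<Sum>i<n. inner (g (p (Suc i)) - g xc) d / real n)"
    using increment by (intro sum_mono) (auto simp: inner_diff_left diff_divide_distrib)
  also have "\<dots> \<le> (\<Sum>i<n. (2 * M + L * (real (Suc i) / real n * t)) * t / real n)"
    using g_increment_bound by (intro sum_mono divide_right_mono) auto
  also have "\<dots> = (\<Sum>i<n. 2 * M * t / real n + (L * t\<^sup>2 / (real n)\<^sup>2) * real (Suc i))"
    by (rule sum.cong) (simp_all add: field_simps power2_eq_square)
  also have "\<dots> = real n * (2 * M * t / real n) + (L * t\<^sup>2 / (real n)\<^sup>2) * (\<Sum>i<n. real (Suc i))"
    by (simp only: sum.distrib sum_distrib_left[symmetric] sum_constant card_lessThan)
  also have "\<dots> = 2 * M * t + L / 2 * t\<^sup>2 + L * t\<^sup>2 / (2 * real n)"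
    unfolding gauss using n by (simp add: field_simps power2_eq_square)
  finally show ?thesis by (simp add: d_def)
qed

lemma subgradient_oracle_descent:
  fixes F :: "'a::real_inner \<Rightarrow> real" and g :: "'a \<Rightarrow> 'a"
  assumes "convex C" and "xc \<in> C" and "x \<in> C"
    and "\<And>p q. p \<in> C \<Longrightarrow> q \<in> C \<Longrightarrow> F p + inner (g p) (q - p) \<le> F q"
    and "\<And>p q. p \<in> C \<Longrightarrow> q \<in> C \<Longrightarrow> norm (g p - g q) \<le> 2 * M + L * norm (p - q)"
  shows "F x - F xc - inner (g xc) (x - xc) \<le> 2 * M * norm (x - xc) + L / 2 * (norm (x - xc))\<^sup>2"
proof (rule LIMSEQ_le_const)
  let ?B = "2 * M * norm (x - xc) + L / 2 * (norm (x - xc))\<^sup>2"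
  let ?c = "L * (norm (x - xc))\<^sup>2 / 2"
  show "(\<lambda>n. ?B + ?c * inverse (real (Suc n))) \<longlonglongrightarrow> ?B"
    using tendsto_add[OF tendsto_const
        tendsto_mult_right_zero[OF LIMSEQ_inverse_real_of_nat, of ?c]]
    by simp
  show "\<exists>N. \<forall>n\<ge>N. F x - F xc - inner (g xc) (x - xc) \<le> ?B + ?c * inverse (real (Suc n))"
    using subgradient_oracle_riemann_bound[OF assms, of "Suc _"] by (auto simp: field_simps)
qed

lemma quadratic_gap_le:
  fixes a lam eps M L t :: real
  assumes a: "0 < a" "a \<le> 1" and lam: "0 < lam" and eps: "0 < eps" and L: "0 \<le> L"
    and lam_small: "lam * (4 * M\<^sup>2 + eps * L) \<le> a\<^sup>2 * eps"
  shows "2 * M * t + L / 2 * t\<^sup>2 - a * t\<^sup>2 / (2 * lam) \<le> a * eps / 2"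
proof -
  define k where "k = a - lam * L"
  have "a\<^sup>2 \<le> a" using a by (simp add: power2_eq_square mult_left_le)
  have "lam * L * eps \<le> a\<^sup>2 * eps - 4 * lam * M\<^sup>2" using lam_small by (simp add: algebra_simps)
  also have "\<dots> \<le> a\<^sup>2 * eps" using lam by simp
  finally have "lam * L \<le> a\<^sup>2" using eps by simp
  then have "0 \<le> k" unfolding k_def using \<open>a\<^sup>2 \<le> a\<close> by linarith
  have discr: "4 * lam * M\<^sup>2 \<le> k * a * eps"
  proof -
    have "a * (lam * L * eps) \<le> lam * L * eps" using a lam L eps by (simp add: mult_left_le_one_le)
    then show ?thesis using lam_small unfolding k_def by (simp add: algebra_simps power2_eq_square)
  qed
  \<comment> \<open>The claim times 2 lam: a quadratic in t with leading coefficient k \<ge> 0 and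
    discriminant 16 lam (4 lam M^2 - k a eps) \<le> 0 is nonnegative.\<close>
  have "0 \<le> k * t\<^sup>2 - 4 * lam * M * t + a * eps * lam"
  proof (cases "k = 0")
    case True
    then have "M = 0" using discr lam by (simp add: mult_le_0_iff)
    then show ?thesis using True a eps lam by simp
  next
    case False
    have "k * (k * t\<^sup>2 - 4 * lam * M * t + a * eps * lam)
        = (k * t - 2 * lam * M)\<^sup>2 + lam * (k * a * eps - 4 * lam * M\<^sup>2)"
      by (simp add: power2_eq_square algebra_simps)
    also have "\<dots> \<ge> 0" using discr lam by simp
    finally show ?thesis using False \<open>0 \<le> k\<close> by (simp add: zero_le_mult_iff)
  qed
  then show ?thesis using lam unfolding k_def by (simp add: field_simps power2_eq_square)
qed

lemma lam_lower_le_half: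
  assumes "0 \<le> eps" "0 \<le> L" and large: "(1 - chi)\<^sup>2 * eps < lam * (4 * M\<^sup>2 + eps * L)"
  shows "lam_lower chi eps M L lam0 \<le> lam / 2"
proof -
  have "0 \<le> (1 - chi)\<^sup>2 * eps" "0 \<le> 4 * M\<^sup>2 + eps * L" using assms by simp_all
  with large have "0 < 4 * M\<^sup>2 + eps * L"
    by (metis less_eq_real_def mult_zero_right not_less)
  then have "8 * M\<^sup>2 + 2 * eps * L \<noteq> 0" and "(1 - chi)\<^sup>2 * eps / (8 * M\<^sup>2 + 2 * eps * L) < lam / 2"
    using large by (simp_all add: field_simps)
  moreover from this(1)
  have "lam_lower chi eps M L lam0 \<le> (1 - chi)\<^sup>2 * eps / (8 * M\<^sup>2 + 2 * eps * L)"
    unfolding lam_lower_def by simp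
  ultimately show ?thesis by linarith
qed

section \<open>The trajectory of the method\<close>

locale ucs_trajectory =
  fixes f h :: "'a::real_inner \<Rightarrow> ereal" and f' :: "'a \<Rightarrow> 'a" and x0 :: 'a
    and chi lam0 eps :: real
  assumes lam0_pos: "0 < lam0"
begin

abbreviation accepts :: "'a \<Rightarrow> real \<Rightarrow> bool" where
  "accepts xc lam \<equiv> ucs_test f f' chi eps xc lam (cs_prox f f' h xc lam)"

text \<open>The run of the method with its stopping test ignored; every state reached by the
  method lies on it.\<close>
primrec traj :: "nat \<Rightarrow> nat \<times> real \<times> 'a" where
  "traj 0 = (0, lam0, x0)"
| "traj (Suc n) = (case traj n of (k, lam, xc) \<Rightarrow>
     if accepts xc lam then (Suc k, lam, cs_prox f f' h xc lam) else (k, lam / 2, xc))"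

abbreviation "level n \<equiv> fst (traj n)"
abbreviation "stepsize n \<equiv> fst (snd (traj n))"
abbreviation "centre n \<equiv> snd (snd (traj n))"

lemma traj_Suc_eq:
  "traj (Suc n) = (if accepts (centre n) (stepsize n)
     then (Suc (level n), stepsize n, cs_prox f f' h (centre n) (stepsize n))
     else (level n, stepsize n / 2, centre n))"
  by (cases "traj n") simp

declare traj.simps(2) [simp del]

lemma stepsize_pos: "0 < stepsize n"
  by (induction n) (simp_all add: lam0_pos traj_Suc_eq)

lemma incseq_level: "incseq level"
  by (rule incseq_SucI) (simp add: traj_Suc_eq)

lemma decseq_stepsize: "decseq stepsize"
proof (rule decseq_SucI)
  show "stepsize (Suc n) \<le> stepsize n" for n
    using stepsize_pos[of n] by (simp add: traj_Suc_eq)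
qed

lemma centre_eq_if_level_eq:
  assumes "n \<le> m" and "level n = level m"
  shows "centre m = centre n"
  using assms
proof (induction m rule: dec_induct)
  case (step m)
  have "level n \<le> level m" "level m \<le> level (Suc m)"
    using incseqD[OF incseq_level] step.hyps(1) by simp_all
  with step.prems have "level n = level m" "level (Suc m) = level m" by simp_all
  moreover have "level (Suc m) = level m \<Longrightarrow> centre (Suc m) = centre m"
    by (simp add: traj_Suc_eq split: if_splits)
  ultimately show ?case using step.IH by simp
qed simp

lemma reach_on_traj:
  assumes "ucs_reach f f' h x0 chi lam0 eps k lam xc"
  shows "\<exists>n. traj n = (k, lam, xc)"
  using assms
proof (induction rule: ucs_reach.induct)
  case init
  show ?case using traj.simps(1) by blast
next
  case (halve k lam xc)
  then obtain n where "traj n = (k, lam, xc)" by blast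
  with halve.hyps(3) have "traj (Suc n) = (k, lam / 2, xc)" by (simp add: traj_Suc_eq)
  then show ?case by blast
next
  case (accept k lam xc)
  then obtain n where "traj n = (k, lam, xc)" by blast
  with accept.hyps(3) have "traj (Suc n) = (Suc k, lam, cs_prox f f' h xc lam)"
    by (simp add: traj_Suc_eq)
  then show ?case by blast
qed

lemma gen_on_traj_first:
  assumes "ucs_gen f f' h x0 chi lam0 eps k lam x"
  shows "\<exists>q. traj q = (k, lam, x) \<and> (\<forall>m<q. level m < k)"
  using assms unfolding ucs_gen_def
proof (elim disjE exE conjE)
  assume "k = 0" "lam = lam0" "x = x0"
  then have "traj 0 = (k, lam, x)" by simp
  then show ?thesis by blast
next
  fix j xc
  assume k: "k = Suc j" and reach: "ucs_reach f f' h x0 chi lam0 eps j lam xc"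
    and acc: "accepts xc lam" and x: "x = cs_prox f f' h xc lam"
  obtain n where n: "traj n = (j, lam, xc)" using reach_on_traj[OF reach] by blast
  have "traj (Suc n) = (k, lam, x)" using n acc k x by (simp add: traj_Suc_eq)
  moreover have "level m < k" if "m < Suc n" for m
    using incseqD[OF incseq_level, of m n] that n k by simp
  ultimately show ?thesis by blast
qed

lemma reach_descends_from_gen:
  assumes "ucs_gen f f' h x0 chi lam0 eps k lamp xp"
    and "ucs_reach f f' h x0 chi lam0 eps k lam xc"
  shows "xc = xp \<and> lam \<le> lamp"
proof -
  obtain q where q: "traj q = (k, lamp, xp)" and before: "\<forall>m<q. level m < k"
    using gen_on_traj_first[OF assms(1)] by blast
  obtain n where n: "traj n = (k, lam, xc)" using reach_on_traj[OF assms(2)] by blast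
  have "q \<le> n"
  proof (rule ccontr)
    assume "\<not> q \<le> n"
    with before have "level n < k" by simp
    with n show False by simp
  qed
  then show ?thesis
    using centre_eq_if_level_eq[of q n] decseqD[OF decseq_stepsize, of q n] q n by simp
qed

end

section \<open>Properties of the iterates\<close>

locale ucs = ucs_trajectory f h f' x0 chi lam0 eps
  for f h :: "'a::euclidean_space \<Rightarrow> ereal" and f' :: "'a \<Rightarrow> 'a" and x0 :: 'a
    and chi lam0 eps :: real +
  fixes Mf Lf :: real
  assumes f_proper: "proper_fun f"
    and h_proper: "proper_fun h" and h_lsc: "lsc_fun h" and h_conv: "econvex h"
    and dom_sub: "edom h \<subseteq> edom f"
    and subgrad: "\<And>x y. x \<in> edom h \<Longrightarrow> f y \<ge> f x + ereal (inner (f' x) (y - x))"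
    and Lf_nonneg: "Lf \<ge> 0"
    and oracle_bound: "\<And>x y. x \<in> edom h \<Longrightarrow> y \<in> edom h \<Longrightarrow>
                         norm (f' x - f' y) \<le> 2 * Mf + Lf * norm (x - y)"
    and x0_dom: "x0 \<in> edom h"
    and chi: "0 \<le> chi" "chi < 1"
    and eps_pos: "eps > 0"
begin

definition f_real :: "'a \<Rightarrow> real" where
  "f_real x = real_of_ereal (f x)"

lemma f_finite: "x \<in> edom h \<Longrightarrow> f x = ereal (f_real x)"
  using dom_sub proper_fun_real_of_ereal[OF f_proper] by (auto simp: edom_def f_real_def)

lemma subgrad_real: "p \<in> edom h \<Longrightarrow> q \<in> edom h \<Longrightarrow> f_real p + inner (f' p) (q - p) \<le> f_real q"
  using subgrad[of p q] f_finite[of p] f_finite[of q] by simp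

lemma cs_obj_eq:
  assumes "xc \<in> edom h"
  shows "cs_obj f f' h xc lam u
    = h u + ereal (f_real xc + inner (f' xc) (u - xc) + (norm (u - xc))\<^sup>2 / (2 * lam))"
  using f_finite[OF assms] unfolding cs_obj_def lin_f_def by (cases "h u") (auto simp: add_ac)

lemma cs_obj_ex1_min:
  assumes "xc \<in> edom h" and "0 < lam"
  shows "\<exists>!x. \<forall>u. cs_obj f f' h xc lam x \<le> cs_obj f f' h xc lam u"
  unfolding cs_obj_eq[OF assms(1)]
  using prox_quadratic_exists_min[OF h_proper h_lsc h_conv assms(2),
      where c = "f_real xc" and v = "f' xc" and z = xc]
    prox_quadratic_min_unique[OF h_proper h_conv assms(2),
      where c = "f_real xc" and v = "f' xc" and z = xc]
  by blast

lemma cs_prox_min: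
  assumes "xc \<in> edom h" and "0 < lam"
  shows "cs_obj f f' h xc lam (cs_prox f f' h xc lam) \<le> cs_obj f f' h xc lam u"
  using theI'[OF cs_obj_ex1_min[OF assms]] unfolding cs_prox_def by blast

lemma cs_prox_unique:
  assumes "xc \<in> edom h" and "0 < lam" and "\<forall>u. cs_obj f f' h xc lam y \<le> cs_obj f f' h xc lam u"
  shows "y = cs_prox f f' h xc lam"
  using cs_obj_ex1_min[OF assms(1,2)] assms(3) cs_prox_min[OF assms(1,2)] by blast

lemma cs_prox_in_edom:
  assumes "xc \<in> edom h" and "0 < lam"
  shows "cs_prox f f' h xc lam \<in> edom h"
  using cs_prox_min[OF assms] unfolding cs_obj_eq[OF assms(1)]
  by (intro minimizer_in_edom[OF h_proper,
      where g = "\<lambda>u. f_real xc + inner (f' xc) (u - xc) + (norm (u - xc))\<^sup>2 / (2 * lam)"]) simp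

lemma ucs_test_iff:
  assumes "xc \<in> edom h" and "x \<in> edom h"
  shows "ucs_test f f' chi eps xc lam x \<longleftrightarrow>
    f_real x - (f_real xc + inner (f' xc) (x - xc)) - (1 - chi) * (norm (x - xc))\<^sup>2 / (2 * lam)
      \<le> (1 - chi) * eps / 2"
  unfolding ucs_test_def lin_f_def using f_finite[OF assms(1)] f_finite[OF assms(2)] by simp

lemma accepts_if_stepsize_small:
  assumes xc: "xc \<in> edom h" and lam: "0 < lam"
    and small: "lam * (4 * Mf\<^sup>2 + eps * Lf) \<le> (1 - chi)\<^sup>2 * eps"
  shows "accepts xc lam"
proof -
  let ?x = "cs_prox f f' h xc lam"
  have x: "?x \<in> edom h" using cs_prox_in_edom[OF xc lam] .
  have "f_real ?x - (f_real xc + inner (f' xc) (?x - xc))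
        - (1 - chi) * (norm (?x - xc))\<^sup>2 / (2 * lam)
      \<le> 2 * Mf * norm (?x - xc) + Lf / 2 * (norm (?x - xc))\<^sup>2
         - (1 - chi) * (norm (?x - xc))\<^sup>2 / (2 * lam)"
    using subgradient_oracle_descent[OF convex_edom[OF h_conv] xc x subgrad_real oracle_bound]
    by simp
  also have "\<dots> \<le> (1 - chi) * eps / 2"
    by (rule quadratic_gap_le) (use chi lam eps_pos Lf_nonneg small in auto)
  finally show ?thesis using ucs_test_iff[OF xc x] by simp
qed

lemma reach_invariant:
  assumes "ucs_reach f f' h x0 chi lam0 eps k lam xc"
  shows "xc \<in> edom h \<and> 0 < lam \<and> lam_lower chi eps Mf Lf lam0 \<le> lam"
  using assms
proof (induction rule: ucs_reach.induct)
  case init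
  show ?case using x0_dom lam0_pos by (simp add: lam_lower_def)
next
  case (halve k lam xc)
  then have "(1 - chi)\<^sup>2 * eps < lam * (4 * Mf\<^sup>2 + eps * Lf)"
    using accepts_if_stepsize_small by force
  then have "lam_lower chi eps Mf Lf lam0 \<le> lam / 2"
    using eps_pos Lf_nonneg by (intro lam_lower_le_half) auto
  with halve.IH show ?case by simp
next
  case (accept k lam xc)
  then show ?case using cs_prox_in_edom by blast
qed

lemma gen_Suc_accepted:
  assumes "ucs_gen f f' h x0 chi lam0 eps k lamp xp"
    and "ucs_gen f f' h x0 chi lam0 eps (Suc k) lamk xk"
  shows "xp \<in> edom h \<and> 0 < lamk \<and> lam_lower chi eps Mf Lf lam0 \<le> lamk \<and> lamk \<le> lamp
    \<and> accepts xp lamk \<and> xk = cs_prox f f' h xp lamk"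
proof -
  obtain xc where reach: "ucs_reach f f' h x0 chi lam0 eps k lamk xc"
    and "accepts xc lamk" "xk = cs_prox f f' h xc lamk"
    using assms(2) unfolding ucs_gen_def by auto
  moreover have "xc = xp \<and> lamk \<le> lamp" using reach_descends_from_gen[OF assms(1) reach] .
  ultimately show ?thesis using reach_invariant[OF reach] by blast
qed

lemma model_le_phi: "xp \<in> edom h \<Longrightarrow> lin_f f f' u xp + h u \<le> f u + h u"
  unfolding lin_f_def using subgrad by (intro add_right_mono)

lemma linearization_gap_if_accepts:
  assumes xp: "xp \<in> edom h" and lam: "0 < lam" and acc: "accepts xp lam"
    and xk: "xk = cs_prox f f' h xp lam"
  shows "f xk - lin_f f f' xk xp + ereal ((chi - 1) / (2 * lam) * (norm (xk - xp))\<^sup>2)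
    \<le> ereal ((1 - chi) * eps / 2)"
proof -
  have "xk \<in> edom h" using cs_prox_in_edom[OF xp lam] xk by simp
  then have "f_real xk - (f_real xp + inner (f' xp) (xk - xp))
      - (1 - chi) * (norm (xk - xp))\<^sup>2 / (2 * lam) \<le> (1 - chi) * eps / 2"
    using acc ucs_test_iff[OF xp] xk by simp
  moreover have "(chi - 1) / (2 * lam) * (norm (xk - xp))\<^sup>2
      = - ((1 - chi) * (norm (xk - xp))\<^sup>2 / (2 * lam))"
    by (simp add: field_split_simps)
  ultimately show ?thesis
    using f_finite[OF xp] f_finite[OF \<open>xk \<in> edom h\<close>] unfolding lin_f_def by simp
qed

lemma optimality_gap_if_accepts:
  assumes xp: "xp \<in> edom h" and lam: "0 < lam" and acc: "accepts xp lam"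
    and xk: "xk = cs_prox f f' h xp lam"
  shows "(f xk + h xk) + ereal (chi / (2 * lam) * (norm (xk - xp))\<^sup>2)
    - (INF u. cs_obj f f' h xp lam u) \<le> ereal ((1 - chi) * eps / 2)"
proof -
  have "xk \<in> edom h" using cs_prox_in_edom[OF xp lam] xk by simp
  then obtain hk where hk: "h xk = ereal hk"
    using proper_fun_real_of_ereal[OF h_proper] unfolding edom_def by blast
  have "(INF u. cs_obj f f' h xp lam u) = cs_obj f f' h xp lam xk"
    using cs_prox_min[OF xp lam] xk by (intro antisym INF_lower2[of xk] INF_greatest) auto
  also have "\<dots>
      = ereal (hk + (f_real xp + inner (f' xp) (xk - xp) + (norm (xk - xp))\<^sup>2 / (2 * lam)))"
    unfolding cs_obj_eq[OF xp] hk by simp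
  finally have inf: "(INF u. cs_obj f f' h xp lam u) = \<dots>" .
  have "f_real xk - (f_real xp + inner (f' xp) (xk - xp))
      - (1 - chi) * (norm (xk - xp))\<^sup>2 / (2 * lam) \<le> (1 - chi) * eps / 2"
    using acc ucs_test_iff[OF xp \<open>xk \<in> edom h\<close>] xk by simp
  moreover have "f_real xk + hk + chi / (2 * lam) * (norm (xk - xp))\<^sup>2
      - (hk + (f_real xp + inner (f' xp) (xk - xp) + (norm (xk - xp))\<^sup>2 / (2 * lam)))
    = f_real xk - (f_real xp + inner (f' xp) (xk - xp))
      - (1 - chi) * (norm (xk - xp))\<^sup>2 / (2 * lam)"
    by (simp add: field_split_simps)
  ultimately show ?thesis unfolding inf f_finite[OF \<open>xk \<in> edom h\<close>] hk by simp
qed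

end

theorem proposition4p1:
  fixes f h :: "'a::euclidean_space \<Rightarrow> ereal"
    and f' :: "'a \<Rightarrow> 'a"
    and Mf Lf chi lam0 eps :: real
    and x0 :: 'a
  assumes f_proper: "proper_fun f" and f_lsc: "lsc_fun f" and f_conv: "econvex f"
    and h_proper: "proper_fun h" and h_lsc: "lsc_fun h" and h_conv: "econvex h"
    and dom_sub: "edom h \<subseteq> edom f"
    and min_attained: "\<exists>xs. \<forall>x. f xs + h xs \<le> f x + h x"
    and subgrad: "\<And>x y. x \<in> edom h \<Longrightarrow> f y \<ge> f x + ereal (inner (f' x) (y - x))"
    and Mf_nonneg: "Mf \<ge> 0" and Lf_nonneg: "Lf \<ge> 0"
    and oracle_bound: "\<And>x y. x \<in> edom h \<Longrightarrow> y \<in> edom h \<Longrightarrow>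
                         norm (f' x - f' y) \<le> 2 * Mf + Lf * norm (x - y)"
    and x0_dom: "x0 \<in> edom h"
    and chi: "0 \<le> chi" "chi < 1"
    and lam0_pos: "lam0 > 0" and eps_pos: "eps > 0"
  shows
    \<comment> \<open>(a) lambda_k non-increasing\<close>
    "(\<forall>k lam lam' x x'. ucs_gen f f' h x0 chi lam0 eps k lam x \<and>
         ucs_gen f f' h x0 chi lam0 eps (Suc k) lam' x' \<longrightarrow> lam' \<le> lam)
     \<and>
    \<comment> \<open>(b) and (c), for every generated iterate k >= 1\<close>
     (\<forall>k lamp xp lamk xk. ucs_gen f f' h x0 chi lam0 eps k lamp xp \<and>
         ucs_gen f f' h x0 chi lam0 eps (Suc k) lamk xk \<longrightarrow>
        (\<forall>u. cs_obj f f' h xp lamk xk \<le> cs_obj f f' h xp lamk u)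
      \<and> (\<forall>y. (\<forall>u. cs_obj f f' h xp lamk y \<le> cs_obj f f' h xp lamk u) \<longrightarrow> y = xk)
      \<and> f xk - lin_f f f' xk xp + ereal ((chi - 1) / (2 * lamk) * (norm (xk - xp))\<^sup>2)
          \<le> ereal ((1 - chi) * eps / 2)
      \<and> lamk \<ge> lam_lower chi eps Mf Lf lam0
      \<and> (\<forall>u. lin_f f f' u xp + h u \<le> f u + h u)
      \<and> (f xk + h xk) + ereal (chi / (2 * lamk) * (norm (xk - xp))\<^sup>2)
          - (INF u. cs_obj f f' h xp lamk u) \<le> ereal ((1 - chi) * eps / 2))"
proof -
  interpret ucs f h f' x0 chi lam0 eps Mf Lf
    by unfold_locales (use assms in auto)
  show ?thesis
    using gen_Suc_accepted cs_prox_min cs_prox_unique linearization_gap_if_accepts model_le_phi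
      optimality_gap_if_accepts
    by blast
qed

end
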